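(* Let $\mu$ be a distribution over $\{0,1\}^V$ and $\theta\in(0,1)$. Let $\pi^{(t)}_{\mathrm{GD}}$ be the law at time $t$ of the Glauber dynamics on $\pi$ started from $\mathsf{lift}(\mathbf 1_V)$, i.e. $\pi^{(0)}_{\mathrm{GD}}$ is the law of $\mathsf{lift}(\mathbf 1_V)$ and $\pi^{(t)}_{\mathrm{GD}}=\pi^{(t-1)}_{\mathrm{GD}}P_{\pi\text{-GD}}$. Then for every $t\ge0$, $\pi^{(t)}_{\mathrm{GD}}P_{\mathrm{cl}}=\pi^{(t)}_{\mathrm{GD}}$.
   Context: $\mathsf{lift}$: random map $\{0,1\}^V\to\{0,1,\star\}^V$, independently per coordinate $0\mapsto0$, $1\mapsto\star$ w.p. $1-\theta$, $1\mapsto1$ w.p. $\theta$. $\mathsf{contr}:\{0,1,\star\}^V\to\{0,1\}^V$: $0\mapsto0$, $1,\star\mapsto1$ coordinatewise. $\pi$ is the law of $\mathsf{lift}(X)$ for $X\sim\mu$, with support $\Omega(\pi)$. $P_{\pi\text{-GD}}$ is the Glauber dynamics on $\pi$: pick $v$ uniformly, resample $X_v$ from $\pi$ conditioned on $X_{V\setminus\{v\}}$. $P_{\mathrm{cl}}$ is the Markov chain sending $X$ to the random configuration $\mathsf{lift}(\mathsf{contr}(X))$. Distributions are row vectors acting on transition matrices from the left. *)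

theory Defs
  imports "HOL-Probability.Probability"
begin

text \<open>Spins of the lifted model: 0, 1 and star. Configurations on the finite
vertex set V (a finite type 'v) are functions 'v => bool (for {0,1}, True = 1)
and 'v => lspin (for {0,1,star}).\<close>

datatype lspin = L0 | L1 | LStar

definition lift_coord :: "real \<Rightarrow> bool \<Rightarrow> lspin pmf" where
  "lift_coord \<theta> b =
     (if b then map_pmf (\<lambda>c. if c then L1 else LStar) (bernoulli_pmf \<theta>)
      else return_pmf L0)"

definition lift :: "real \<Rightarrow> ('v::finite \<Rightarrow> bool) \<Rightarrow> ('v \<Rightarrow> lspin) pmf" where
  "lift \<theta> x = Pi_pmf UNIV L0 (\<lambda>v. lift_coord \<theta> (x v))"

definition contr :: "('v \<Rightarrow> lspin) \<Rightarrow> ('v \<Rightarrow> bool)" where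
  "contr X = (\<lambda>v. X v \<noteq> L0)"

text \<open>pi = law of lift(X) for X ~ mu.\<close>
definition lifted_dist :: "('v::finite \<Rightarrow> bool) pmf \<Rightarrow> real \<Rightarrow> ('v \<Rightarrow> lspin) pmf" where
  "lifted_dist \<mu> \<theta> = bind_pmf \<mu> (lift \<theta>)"

text \<open>Convention: if the conditioning
event has zero p-probability, the configuration is left unchanged.\<close>
definition glauber_step :: "('v::finite \<Rightarrow> 'a) pmf \<Rightarrow> ('v \<Rightarrow> 'a) \<Rightarrow> ('v \<Rightarrow> 'a) pmf" where
  "glauber_step p X =
     bind_pmf (pmf_of_set UNIV) (\<lambda>v.
       let S = {Y. \<forall>u. u \<noteq> v \<longrightarrow> Y u = X u} in
       if set_pmf p \<inter> S = {} then return_pmf X else cond_pmf p S)"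

definition P_cl :: "real \<Rightarrow> ('v::finite \<Rightarrow> lspin) \<Rightarrow> ('v \<Rightarrow> lspin) pmf" where
  "P_cl \<theta> X = lift \<theta> (contr X)"

primrec gd_law :: "('v::finite \<Rightarrow> bool) pmf \<Rightarrow> real \<Rightarrow> nat \<Rightarrow> ('v \<Rightarrow> lspin) pmf" where
  "gd_law \<mu> \<theta> 0 = lift \<theta> (\<lambda>_. True)"
| "gd_law \<mu> \<theta> (Suc t) = bind_pmf (gd_law \<mu> \<theta> t) (glauber_step (lifted_dist \<mu> \<theta>))"

end

theory Submission
  imports Defs
begin

text \<open>Call a law \<open>\<nu>\<close> on \<open>{0,1,\<star>}\<^sup>V\<close> of lifted form if its mass function factorises as
\<open>\<nu>(Y) = F(contr Y) \<cdot> w(Y)\<close>, where \<open>w(Y) = \<Prod>\<^sub>v w(Y\<^sub>v)\<close> is the probability that \<open>lift(contr Y)\<close> equals \<open>Y\<close>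
(\<open>w(0) = 1\<close>, \<open>w(1) = \<theta>\<close>, \<open>w(\<star>) = 1 - \<theta>\<close>). A law of lifted form is fixed by \<open>P\<^sub>c\<^sub>l\<close>, which only
resamples \<open>Y\<close> among the lifts of \<open>contr Y\<close> with the weights \<open>w\<close>. The start \<open>lift(1\<^sub>V)\<close> and
\<open>\<pi>\<close> itself are of lifted form, and a Glauber update at a site \<open>v\<close> preserves the form:
conditioned on the configuration off \<open>v\<close>, the new configuration has law proportional to
\<open>\<pi>\<close>, i.e. to \<open>F\<^sub>\<pi>(contr \<cdot>) \<cdot> w(\<cdot>)\<close>, while the weight of the sites other than \<open>v\<close> is common
to all configurations that differ from \<open>Y\<close> only at \<open>v\<close>.\<close>

lemma UNIV_lspin: "(UNIV :: lspin set) = {L0, L1, LStar}"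
  using lspin.exhaust by auto

instance lspin :: finite
  by standard (simp add: UNIV_lspin)

lemma pmf_bind_finite:
  fixes N :: "'a::finite pmf"
  shows "pmf (bind_pmf N f) y = (\<Sum>x\<in>UNIV. pmf N x * pmf (f x) y)"
  by (simp add: pmf_bind integral_measure_pmf_real[where A=UNIV] mult.commute)

definition spin_weight :: "real \<Rightarrow> lspin \<Rightarrow> real" where
  "spin_weight \<theta> c = (case c of L0 \<Rightarrow> 1 | L1 \<Rightarrow> \<theta> | LStar \<Rightarrow> 1 - \<theta>)"

definition lift_weight :: "real \<Rightarrow> ('v::finite \<Rightarrow> lspin) \<Rightarrow> real" where
  "lift_weight \<theta> Y = (\<Prod>v\<in>UNIV. spin_weight \<theta> (Y v))"

lemma prod_spin_weight_pos:
  assumes "0 < \<theta>" "\<theta> < 1"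
  shows "(\<Prod>u\<in>A. spin_weight \<theta> (Y u)) > 0"
proof (rule prod_pos)
  show "0 < spin_weight \<theta> (Y u)" for u
    using assms by (cases "Y u") (auto simp: spin_weight_def)
qed

lemma lift_weight_fun_upd:
  "lift_weight \<theta> (Y(v := c)) = spin_weight \<theta> c * (\<Prod>u\<in>-{v}. spin_weight \<theta> (Y u))"
proof -
  have "lift_weight \<theta> (Y(v := c)) = spin_weight \<theta> c * (\<Prod>u\<in>UNIV-{v}. spin_weight \<theta> ((Y(v := c)) u))"
    unfolding lift_weight_def by (subst prod.remove[of UNIV v]) auto
  also have "(\<Prod>u\<in>UNIV-{v}. spin_weight \<theta> ((Y(v := c)) u)) = (\<Prod>u\<in>-{v}. spin_weight \<theta> (Y u))"
    by (rule prod.cong) (auto simp: Compl_eq_Diff_UNIV)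
  finally show ?thesis .
qed

lemma pmf_lift_coord:
  assumes "0 \<le> \<theta>" "\<theta> \<le> 1"
  shows "pmf (lift_coord \<theta> b) c = (if (c \<noteq> L0) = b then spin_weight \<theta> c else 0)"
proof (cases b)
  case True
  have "(\<lambda>b. if b then L1 else LStar) -` {c} = (if c = L1 then {True} else if c = LStar then {False} else {})"
    by (cases c) (auto split: if_splits)
  with True assms show ?thesis
    by (cases c) (auto simp: lift_coord_def pmf_map spin_weight_def measure_pmf_single)
next
  case False
  then show ?thesis by (cases c) (auto simp: lift_coord_def spin_weight_def)
qed

lemma pmf_lift:
  assumes "0 \<le> \<theta>" "\<theta> \<le> 1"
  shows "pmf (lift \<theta> x) Y = (if contr Y = x then lift_weight \<theta> Y else 0)"
proof -
  have "pmf (lift \<theta> x) Y = (\<Prod>v\<in>UNIV. if (Y v \<noteq> L0) = x v then spin_weight \<theta> (Y v) else 0)"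
    unfolding lift_def using assms by (subst pmf_Pi) (auto simp: pmf_lift_coord)
  also have "\<dots> = (if contr Y = x then lift_weight \<theta> Y else 0)"
  proof (cases "contr Y = x")
    case True
    then show ?thesis by (auto simp: lift_weight_def contr_def)
  next
    case False
    then obtain v where "(Y v \<noteq> L0) \<noteq> x v" by (auto simp: contr_def)
    with False show ?thesis by (subst prod_zero) auto
  qed
  finally show ?thesis .
qed

lemma sum_lift_weight_fiber:
  assumes "0 \<le> \<theta>" "\<theta> \<le> 1"
  shows "(\<Sum>Y | contr Y = x. lift_weight \<theta> Y) = 1"
proof -
  have "(\<Sum>Y | contr Y = x. lift_weight \<theta> Y) = (\<Sum>Y\<in>UNIV. pmf (lift \<theta> x) Y)"
    using assms by (simp add: pmf_lift sum.If_cases)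
  then show ?thesis by (simp add: sum_pmf_eq_1)
qed

definition has_lift_form :: "real \<Rightarrow> ('v::finite \<Rightarrow> lspin) pmf \<Rightarrow> (('v \<Rightarrow> bool) \<Rightarrow> real) \<Rightarrow> bool" where
  "has_lift_form \<theta> p F \<longleftrightarrow> (\<forall>Y. pmf p Y = F (contr Y) * lift_weight \<theta> Y)"

lemma has_lift_form_lift:
  assumes "0 \<le> \<theta>" "\<theta> \<le> 1"
  shows "has_lift_form \<theta> (lift \<theta> x) (\<lambda>z. if z = x then 1 else 0)"
  using assms by (simp add: has_lift_form_def pmf_lift)

lemma has_lift_form_lifted_dist:
  assumes "0 \<le> \<theta>" "\<theta> \<le> 1"
  shows "has_lift_form \<theta> (lifted_dist \<mu> \<theta>) (pmf \<mu>)"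
  unfolding has_lift_form_def
proof
  fix Y
  have "pmf (lifted_dist \<mu> \<theta>) Y = (\<Sum>x\<in>UNIV. if x = contr Y then pmf \<mu> x * lift_weight \<theta> Y else 0)"
    unfolding lifted_dist_def pmf_bind_finite using assms
    by (intro sum.cong) (auto simp: pmf_lift)
  then show "pmf (lifted_dist \<mu> \<theta>) Y = pmf \<mu> (contr Y) * lift_weight \<theta> Y"
    by simp
qed

lemma P_cl_invariant_if_has_lift_form:
  assumes "0 \<le> \<theta>" "\<theta> \<le> 1" and "has_lift_form \<theta> \<nu> F"
  shows "bind_pmf \<nu> (P_cl \<theta>) = \<nu>"
proof (rule pmf_eqI)
  fix Y
  have "pmf (bind_pmf \<nu> (P_cl \<theta>)) Y
      = (\<Sum>X\<in>UNIV. if X \<in> {X. contr X = contr Y} then F (contr Y) * lift_weight \<theta> Y * lift_weight \<theta> X else 0)"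
    unfolding pmf_bind_finite P_cl_def using assms
    by (intro sum.cong) (auto simp: pmf_lift has_lift_form_def)
  also have "\<dots> = F (contr Y) * lift_weight \<theta> Y * (\<Sum>X | contr X = contr Y. lift_weight \<theta> X)"
    by (simp add: sum.If_cases sum_distrib_left)
  also have "\<dots> = pmf \<nu> Y"
    using assms by (simp add: sum_lift_weight_fiber has_lift_form_def)
  finally show "pmf (bind_pmf \<nu> (P_cl \<theta>)) Y = pmf \<nu> Y" .
qed

definition site_line :: "'v \<Rightarrow> ('v \<Rightarrow> 'a) \<Rightarrow> ('v \<Rightarrow> 'a) set" where
  "site_line v X = {Y. \<forall>u. u \<noteq> v \<longrightarrow> Y u = X u}"

definition resample_site :: "('v \<Rightarrow> 'a) pmf \<Rightarrow> 'v \<Rightarrow> ('v \<Rightarrow> 'a) \<Rightarrow> ('v \<Rightarrow> 'a) pmf" where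
  "resample_site p v X =
     (if set_pmf p \<inter> site_line v X = {} then return_pmf X else cond_pmf p (site_line v X))"

lemma glauber_step_eq_resample_site:
  "glauber_step p X = bind_pmf (pmf_of_set UNIV) (\<lambda>v. resample_site p v X)"
  unfolding glauber_step_def resample_site_def site_line_def Let_def ..

lemma site_line_eq_range: "site_line v X = range (\<lambda>c. X(v := c))"
proof (intro set_eqI iffI)
  fix Y assume "Y \<in> site_line v X"
  then have "Y = X(v := Y v)" by (auto simp: site_line_def)
  then show "Y \<in> range (\<lambda>c. X(v := c))" by blast
qed (auto simp: site_line_def)

lemma pmf_resample_site:
  "pmf (resample_site p v X) Y =
     (if X \<notin> site_line v Y then 0
      else if set_pmf p \<inter> site_line v Y = {} then (if X = Y then 1 else 0)
      else pmf p Y / measure p (site_line v Y))"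
proof (cases "X \<in> site_line v Y")
  case True
  then have "site_line v X = site_line v Y" "Y \<in> site_line v Y"
    by (auto simp: site_line_def)
  with True show ?thesis
    by (simp add: resample_site_def pmf_cond)
next
  case False
  then have "Y \<notin> site_line v X" "X \<noteq> Y"
    by (auto simp: site_line_def)
  with False show ?thesis
    by (auto simp: resample_site_def pmf_cond)
qed

definition site_sum :: "(('v \<Rightarrow> bool) \<Rightarrow> real) \<Rightarrow> 'v \<Rightarrow> ('v \<Rightarrow> bool) \<Rightarrow> real" where
  "site_sum F v z = F (z(v := False)) + F (z(v := True))"

lemma contr_fun_upd: "contr (X(v := c)) = (contr X)(v := (c \<noteq> L0))"
  by (auto simp: contr_def)

lemma measure_site_line:
  assumes "has_lift_form \<theta> p F"
  shows "measure p (site_line v X) = site_sum F v (contr X) * (\<Prod>u\<in>-{v}. spin_weight \<theta> (X u))"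
proof -
  have "inj (\<lambda>c. X(v := c))"
    by (rule injI) (metis fun_upd_same)
  then have "measure p (site_line v X) = (\<Sum>c\<in>UNIV. pmf p (X(v := c)))"
    by (simp add: site_line_eq_range measure_measure_pmf_finite sum.reindex)
  also have "\<dots> = (\<Sum>c\<in>UNIV. F ((contr X)(v := (c \<noteq> L0))) * (spin_weight \<theta> c * (\<Prod>u\<in>-{v}. spin_weight \<theta> (X u))))"
    using assms by (simp add: has_lift_form_def lift_weight_fun_upd contr_fun_upd)
  also have "\<dots> = site_sum F v (contr X) * (\<Prod>u\<in>-{v}. spin_weight \<theta> (X u))"
    by (simp add: UNIV_lspin spin_weight_def site_sum_def algebra_simps)
  finally show ?thesis .
qed

lemma pmf_bind_resample_site:
  fixes \<nu> p :: "('v::finite \<Rightarrow> 'a::finite) pmf"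
  shows "pmf (bind_pmf \<nu> (resample_site p v)) Y =
    (if set_pmf p \<inter> site_line v Y = {} then pmf \<nu> Y
     else measure \<nu> (site_line v Y) * pmf p Y / measure p (site_line v Y))"
proof -
  define L where "L = site_line v Y"
  have "Y \<in> L"
    by (simp add: L_def site_line_def)
  have "pmf (bind_pmf \<nu> (resample_site p v)) Y = (\<Sum>X\<in>L. pmf \<nu> X * pmf (resample_site p v X) Y)"
    unfolding pmf_bind_finite
    by (rule sum.mono_neutral_right) (auto simp: pmf_resample_site L_def)
  also have "\<dots> = (if set_pmf p \<inter> L = {} then pmf \<nu> Y else measure \<nu> L * pmf p Y / measure p L)"
  proof (cases "set_pmf p \<inter> L = {}")
    case True
    then have "(\<Sum>X\<in>L. pmf \<nu> X * pmf (resample_site p v X) Y) = (\<Sum>X\<in>L. if X = Y then pmf \<nu> X else 0)"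
      by (intro sum.cong) (auto simp: pmf_resample_site L_def)
    with True \<open>Y \<in> L\<close> show ?thesis
      by simp
  next
    case False
    then have "(\<Sum>X\<in>L. pmf \<nu> X * pmf (resample_site p v X) Y) = (\<Sum>X\<in>L. pmf \<nu> X) * (pmf p Y / measure p L)"
      unfolding sum_distrib_right by (intro sum.cong) (auto simp: pmf_resample_site L_def)
    with False show ?thesis
      by (simp add: measure_measure_pmf_finite)
  qed
  finally show ?thesis
    by (simp add: L_def)
qed

text \<open>Where \<open>G\<close> puts no mass on the line through \<open>z\<close>, the Glauber step keeps the
configuration, and so the density \<open>F\<close> is kept.\<close>

definition site_update :: "(('v \<Rightarrow> bool) \<Rightarrow> real) \<Rightarrow> (('v \<Rightarrow> bool) \<Rightarrow> real) \<Rightarrow> 'v \<Rightarrow> ('v \<Rightarrow> bool) \<Rightarrow> real" where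
  "site_update F G v z =
     (if site_sum G v z = 0 then F z else G z * site_sum F v z / site_sum G v z)"

lemma has_lift_form_resample_site:
  fixes \<nu> p :: "('v::finite \<Rightarrow> lspin) pmf"
  assumes \<theta>: "0 < \<theta>" "\<theta> < 1"
    and \<nu>: "has_lift_form \<theta> \<nu> F" and p: "has_lift_form \<theta> p G"
  shows "has_lift_form \<theta> (bind_pmf \<nu> (resample_site p v)) (site_update F G v)"
  unfolding has_lift_form_def
proof
  fix Y :: "'v \<Rightarrow> lspin"
  define L where "L = site_line v Y"
  define z where "z = contr Y"
  define rest where "rest = (\<Prod>u\<in>-{v}. spin_weight \<theta> (Y u))"
  have "rest > 0"
    unfolding rest_def using \<theta> by (rule prod_spin_weight_pos)
  have measure_p: "measure p L = site_sum G v z * rest"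
    unfolding L_def z_def rest_def using p by (rule measure_site_line)
  have measure_\<nu>: "measure \<nu> L = site_sum F v z * rest"
    unfolding L_def z_def rest_def using \<nu> by (rule measure_site_line)
  show "pmf (bind_pmf \<nu> (resample_site p v)) Y = site_update F G v (contr Y) * lift_weight \<theta> Y"
  proof (cases "set_pmf p \<inter> L = {}")
    case True
    then have "measure p L = 0"
      by (simp add: measure_pmf_zero_iff)
    then have "site_sum G v z = 0"
      using measure_p \<open>rest > 0\<close> by simp
    with True \<nu> show ?thesis
      by (simp add: pmf_bind_resample_site L_def[symmetric] has_lift_form_def site_update_def z_def)
  next
    case False
    then have "measure p L \<noteq> 0"
      by (simp add: measure_pmf_zero_iff)
    then have "site_sum G v z \<noteq> 0"
      using measure_p by simp
    have "pmf (bind_pmf \<nu> (resample_site p v)) Y = measure \<nu> L * pmf p Y / measure p L"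
      using False by (simp add: pmf_bind_resample_site L_def)
    also have "\<dots> = site_sum F v z * rest * (G z * lift_weight \<theta> Y) / (site_sum G v z * rest)"
      using p by (simp add: measure_\<nu> measure_p has_lift_form_def z_def)
    also have "\<dots> = site_update F G v z * lift_weight \<theta> Y"
      using \<open>site_sum G v z \<noteq> 0\<close> \<open>rest > 0\<close> by (simp add: site_update_def field_simps)
    finally show ?thesis
      by (simp add: z_def)
  qed
qed

lemma has_lift_form_glauber_step:
  fixes \<nu> p :: "('v::finite \<Rightarrow> lspin) pmf"
  assumes "0 < \<theta>" "\<theta> < 1" and "has_lift_form \<theta> \<nu> F" and "has_lift_form \<theta> p G"
  shows "has_lift_form \<theta> (bind_pmf \<nu> (glauber_step p))
           (\<lambda>z. (\<Sum>v\<in>UNIV. site_update F G v z) / real CARD('v))"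
proof -
  have "bind_pmf \<nu> (glauber_step p) = bind_pmf (pmf_of_set UNIV) (\<lambda>v. bind_pmf \<nu> (resample_site p v))"
    unfolding glauber_step_eq_resample_site by (rule bind_commute_pmf)
  then show ?thesis
    using has_lift_form_resample_site[OF assms]
    by (simp add: has_lift_form_def pmf_bind_pmf_of_set sum_divide_distrib sum_distrib_right)
qed

lemma gd_law_has_lift_form:
  assumes "0 < \<theta>" "\<theta> < 1"
  shows "\<exists>F. has_lift_form \<theta> (gd_law \<mu> \<theta> t) F"
proof (induction t)
  case 0
  show ?case
    using has_lift_form_lift[of \<theta> "\<lambda>_. True"] assms by auto
next
  case (Suc t)
  then show ?case
    using has_lift_form_glauber_step[OF assms _ has_lift_form_lifted_dist] assms by fastforce
qed

theorem lemma3p4: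
  fixes \<mu> :: "('v::finite \<Rightarrow> bool) pmf" and \<theta> :: real
  assumes "0 < \<theta>" and "\<theta> < 1"
  shows "\<forall>t. bind_pmf (gd_law \<mu> \<theta> t) (P_cl \<theta>) = gd_law \<mu> \<theta> t"
proof
  fix t
  obtain F where "has_lift_form \<theta> (gd_law \<mu> \<theta> t) F"
    using gd_law_has_lift_form assms by blast
  then show "bind_pmf (gd_law \<mu> \<theta> t) (P_cl \<theta>) = gd_law \<mu> \<theta> t"
    using P_cl_invariant_if_has_lift_form assms by (metis less_imp_le)
qed

end
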